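(* Let $V$ be a mixed lattice vector space and $p$ a seminorm on $V$. The following are equivalent: (a) $p$ is a mixed lattice seminorm; (b) $p$ is a mixed-monotone seminorm and $p(s(x))=p(x)$ for all $x\in V$.
   Context: A mixed lattice vector space $(V,\le,\preccurlyeq)$ is a real vector space $V$ with two partial orderings $\le$ (initial order) and $\preccurlyeq$ (specific order), each making $V$ a partially ordered vector space, with positive cones $V_p=\{x:0\le x\}$, $V_{sp}=\{x:0\preccurlyeq x\}$, such that: (1) for all $x,y$ the elements $x\curlyvee y=\min\{w: w\succcurlyeq x,\ w\ge y\}$ and $x\curlywedge y=\max\{w: w\preccurlyeq x,\ w\le y\}$ exist (min/max with respect to $\le$); (2) $x\preccurlyeq y$ implies $x\le y$; (3) $x\curlyvee y, x\curlywedge y\in V_{sp}$ whenever $x,y\in V_{sp}$. Notation: $x^u=0\curlyvee x$, $x^l=0\curlyvee(-x)$, $s(x)=x^u+x^l$. A seminorm $p$ is mixed-monotone if $0\preccurlyeq x\le y$ implies $p(x)\le p(y)$, and is a mixed lattice seminorm if $s(x)\le s(y)$ implies $p(x)\le p(y)$. *)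

theory Defs
  imports Main "HOL-Analysis.Analysis"
begin

definition partial_order_rel :: "('a \<Rightarrow> 'a \<Rightarrow> bool) \<Rightarrow> bool" where
  "partial_order_rel r \<longleftrightarrow>
     (\<forall>x. r x x) \<and> (\<forall>x y. r x y \<and> r y x \<longrightarrow> x = y) \<and>
     (\<forall>x y z. r x y \<and> r y z \<longrightarrow> r x z)"

definition ordered_vector_rel :: "('a::real_vector \<Rightarrow> 'a \<Rightarrow> bool) \<Rightarrow> bool" where
  "ordered_vector_rel r \<longleftrightarrow> partial_order_rel r \<and>
     (\<forall>x y z. r x y \<longrightarrow> r (x + z) (y + z)) \<and>
     (\<forall>x y (c::real). r x y \<and> 0 \<le> c \<longrightarrow> r (c *\<^sub>R x) (c *\<^sub>R y))"

definition is_least_rel :: "('a \<Rightarrow> 'a \<Rightarrow> bool) \<Rightarrow> 'a set \<Rightarrow> 'a \<Rightarrow> bool" where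
  "is_least_rel r S w \<longleftrightarrow> w \<in> S \<and> (\<forall>v\<in>S. r w v)"

definition is_greatest_rel :: "('a \<Rightarrow> 'a \<Rightarrow> bool) \<Rightarrow> 'a set \<Rightarrow> 'a \<Rightarrow> bool" where
  "is_greatest_rel r S w \<longleftrightarrow> w \<in> S \<and> (\<forall>v\<in>S. r v w)"

text \<open>Mixed upper bound \<open>x \<curlyvee> y = min\<^sub>\<le>{w. x \<preccurlyeq> w, y \<le> w}\<close> and
  mixed lower bound \<open>x \<curlywedge> y = max\<^sub>\<le>{w. w \<preccurlyeq> x, w \<le> y}\<close>;
  \<open>le\<close> is the initial order \<open>\<le>\<close>, \<open>sle\<close> the specific order \<open>\<preccurlyeq>\<close>.\<close>
definition mixed_upper :: "('a \<Rightarrow> 'a \<Rightarrow> bool) \<Rightarrow> ('a \<Rightarrow> 'a \<Rightarrow> bool) \<Rightarrow> 'a \<Rightarrow> 'a \<Rightarrow> 'a" where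
  "mixed_upper le sle x y = (THE w. is_least_rel le {w. sle x w \<and> le y w} w)"

definition mixed_lower :: "('a \<Rightarrow> 'a \<Rightarrow> bool) \<Rightarrow> ('a \<Rightarrow> 'a \<Rightarrow> bool) \<Rightarrow> 'a \<Rightarrow> 'a \<Rightarrow> 'a" where
  "mixed_lower le sle x y = (THE w. is_greatest_rel le {w. sle w x \<and> le w y} w)"

definition mixed_lattice_vector_space ::
  "('a::real_vector \<Rightarrow> 'a \<Rightarrow> bool) \<Rightarrow> ('a \<Rightarrow> 'a \<Rightarrow> bool) \<Rightarrow> bool" where
  "mixed_lattice_vector_space le sle \<longleftrightarrow>
     ordered_vector_rel le \<and> ordered_vector_rel sle \<and>
     (\<forall>x y. \<exists>w. is_least_rel le {w. sle x w \<and> le y w} w) \<and>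
     (\<forall>x y. \<exists>w. is_greatest_rel le {w. sle w x \<and> le w y} w) \<and>
     (\<forall>x y. sle x y \<longrightarrow> le x y) \<and>
     (\<forall>x y. sle 0 x \<and> sle 0 y \<longrightarrow>
        sle 0 (mixed_upper le sle x y) \<and> sle 0 (mixed_lower le sle x y))"

definition upper_part :: "('a::real_vector \<Rightarrow> 'a \<Rightarrow> bool) \<Rightarrow> ('a \<Rightarrow> 'a \<Rightarrow> bool) \<Rightarrow> 'a \<Rightarrow> 'a" where
  "upper_part le sle x = mixed_upper le sle 0 x"

definition lower_part :: "('a::real_vector \<Rightarrow> 'a \<Rightarrow> bool) \<Rightarrow> ('a \<Rightarrow> 'a \<Rightarrow> bool) \<Rightarrow> 'a \<Rightarrow> 'a" where
  "lower_part le sle x = mixed_upper le sle 0 (- x)"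

definition sgen :: "('a::real_vector \<Rightarrow> 'a \<Rightarrow> bool) \<Rightarrow> ('a \<Rightarrow> 'a \<Rightarrow> bool) \<Rightarrow> 'a \<Rightarrow> 'a" where
  "sgen le sle x = upper_part le sle x + lower_part le sle x"

definition is_seminorm :: "('a::real_vector \<Rightarrow> real) \<Rightarrow> bool" where
  "is_seminorm p \<longleftrightarrow>
     (\<forall>x y. p (x + y) \<le> p x + p y) \<and> (\<forall>(c::real) x. p (c *\<^sub>R x) = \<bar>c\<bar> * p x)"

definition mixed_monotone :: "('a::real_vector \<Rightarrow> 'a \<Rightarrow> bool) \<Rightarrow> ('a \<Rightarrow> 'a \<Rightarrow> bool) \<Rightarrow> ('a \<Rightarrow> real) \<Rightarrow> bool" where
  "mixed_monotone le sle p \<longleftrightarrow> (\<forall>x y. sle 0 x \<and> le x y \<longrightarrow> p x \<le> p y)"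

definition mixed_lattice_seminorm :: "('a::real_vector \<Rightarrow> 'a \<Rightarrow> bool) \<Rightarrow> ('a \<Rightarrow> 'a \<Rightarrow> bool) \<Rightarrow> ('a \<Rightarrow> real) \<Rightarrow> bool" where
  "mixed_lattice_seminorm le sle p \<longleftrightarrow>
     (\<forall>x y. le (sgen le sle x) (sgen le sle y) \<longrightarrow> p x \<le> p y)"

end

theory Submission
  imports Defs
begin

text \<open>The map \<open>s\<close> is a retraction onto the specific positive cone with \<open>x \<le> s(x)\<close>.
  So for \<open>0 \<preccurlyeq> x \<le> y\<close> we get \<open>s(x) = x \<le> y \<le> s(y)\<close>, and \<open>s(s(x)) = s(x)\<close> forces
  \<open>p(s(x)) = p(x)\<close>; conversely \<open>s(x) \<le> s(y)\<close> with \<open>0 \<preccurlyeq> s(x)\<close> is a case of mixed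
  monotonicity.\<close>

lemma ordered_vector_rel_add_nonneg:
  assumes "ordered_vector_rel r" "r 0 a" "r 0 b"
  shows "r 0 (a + b)"
proof -
  have "r b (a + b)"
    using assms(1,2) unfolding ordered_vector_rel_def by (metis add_0)
  with assms(1,3) show ?thesis
    unfolding ordered_vector_rel_def partial_order_rel_def by blast
qed

lemma ordered_vector_rel_le_add_nonneg:
  assumes "ordered_vector_rel r" "r 0 b"
  shows "r a (a + b)"
  using assms unfolding ordered_vector_rel_def by (metis add_0 add.commute)

lemma ordered_vector_rel_neg_nonpos:
  assumes "ordered_vector_rel r" "r 0 x"
  shows "r (- x) 0"
proof -
  have "r (0 + - x) (x + - x)"
    using assms unfolding ordered_vector_rel_def by blast
  then show ?thesis by simp
qed

context
  fixes le sle :: "'a::real_vector \<Rightarrow> 'a \<Rightarrow> bool"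
  assumes mixed: "mixed_lattice_vector_space le sle"
begin

lemma ordered_vector_rel_initial: "ordered_vector_rel le"
  and ordered_vector_rel_specific: "ordered_vector_rel sle"
  and specific_imp_initial: "sle x y \<Longrightarrow> le x y"
  using mixed unfolding mixed_lattice_vector_space_def by blast+

lemma partial_order_rel_initial: "partial_order_rel le"
  using ordered_vector_rel_initial unfolding ordered_vector_rel_def by blast

lemma initial_refl: "le x x"
  and initial_antisym: "le x y \<Longrightarrow> le y x \<Longrightarrow> x = y"
  and initial_trans: "le x y \<Longrightarrow> le y z \<Longrightarrow> le x z"
  using partial_order_rel_initial unfolding partial_order_rel_def by blast+

lemma mixed_upper_is_least:
  "is_least_rel le {w. sle x w \<and> le y w} (mixed_upper le sle x y)"
proof -
  obtain w where w: "is_least_rel le {w. sle x w \<and> le y w} w"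
    using mixed unfolding mixed_lattice_vector_space_def by blast
  have "v = w" if "is_least_rel le {w. sle x w \<and> le y w} v" for v
    using w that initial_antisym unfolding is_least_rel_def by blast
  then have "mixed_upper le sle x y = w"
    unfolding mixed_upper_def using w by (rule the_equality[rotated])
  with w show ?thesis by simp
qed

lemma upper_part_least:
  "sle 0 (upper_part le sle x)"
  "le x (upper_part le sle x)"
  "sle 0 v \<Longrightarrow> le x v \<Longrightarrow> le (upper_part le sle x) v"
  using mixed_upper_is_least[of 0 x] unfolding upper_part_def is_least_rel_def by blast+

lemma lower_part_least:
  "sle 0 (lower_part le sle x)"
  "le (- x) (lower_part le sle x)"
  "sle 0 v \<Longrightarrow> le (- x) v \<Longrightarrow> le (lower_part le sle x) v"
  using mixed_upper_is_least[of 0 "- x"] unfolding lower_part_def is_least_rel_def by blast+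

lemma sgen_specific_nonneg: "sle 0 (sgen le sle x)"
  unfolding sgen_def
  using ordered_vector_rel_add_nonneg[OF ordered_vector_rel_specific
      upper_part_least(1) lower_part_least(1)] .

lemma le_sgen: "le x (sgen le sle x)"
proof -
  have "le (upper_part le sle x) (sgen le sle x)"
    unfolding sgen_def
    using ordered_vector_rel_le_add_nonneg[OF ordered_vector_rel_initial]
      specific_imp_initial[OF lower_part_least(1)] by blast
  with upper_part_least(2) show ?thesis by (rule initial_trans)
qed

lemma sgen_specific_nonneg_eq:
  assumes "sle 0 x"
  shows "sgen le sle x = x"
proof -
  have "upper_part le sle x = x"
    using upper_part_least(2,3)[of x] assms initial_refl initial_antisym by blast
  moreover have "lower_part le sle x = 0"
  proof (rule initial_antisym)
    have "sle 0 0"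
      using ordered_vector_rel_specific unfolding ordered_vector_rel_def partial_order_rel_def
      by blast
    moreover have "le (- x) 0"
      by (rule ordered_vector_rel_neg_nonpos[OF ordered_vector_rel_initial
            specific_imp_initial[OF assms]])
    ultimately show "le (lower_part le sle x) 0" by (rule lower_part_least(3))
    show "le 0 (lower_part le sle x)"
      using specific_imp_initial[OF lower_part_least(1)] .
  qed
  ultimately show ?thesis unfolding sgen_def by simp
qed

lemma sgen_idem: "sgen le sle (sgen le sle x) = sgen le sle x"
  using sgen_specific_nonneg sgen_specific_nonneg_eq by blast

lemma mixed_lattice_seminorm_imp_mixed_monotone:
  assumes "mixed_lattice_seminorm le sle p"
  shows "mixed_monotone le sle p"
  unfolding mixed_monotone_def
proof (intro allI impI, elim conjE)
  fix x y assume "sle 0 x" "le x y"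
  then have "le (sgen le sle x) (sgen le sle y)"
    using sgen_specific_nonneg_eq[of x] le_sgen[of y] initial_trans by simp
  with assms show "p x \<le> p y" unfolding mixed_lattice_seminorm_def by blast
qed

lemma mixed_lattice_seminorm_sgen_eq:
  assumes "mixed_lattice_seminorm le sle p"
  shows "p (sgen le sle x) = p x"
  using assms sgen_idem initial_refl unfolding mixed_lattice_seminorm_def
  by (metis order_antisym)

lemma mixed_monotone_imp_mixed_lattice_seminorm:
  assumes "mixed_monotone le sle p" and "\<And>x. p (sgen le sle x) = p x"
  shows "mixed_lattice_seminorm le sle p"
  unfolding mixed_lattice_seminorm_def
proof (intro allI impI)
  fix x y assume "le (sgen le sle x) (sgen le sle y)"
  with assms(1) sgen_specific_nonneg have "p (sgen le sle x) \<le> p (sgen le sle y)"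
    unfolding mixed_monotone_def by blast
  then show "p x \<le> p y" using assms(2) by simp
qed

end

theorem proposition4p4:
  fixes le sle :: "'a::real_vector \<Rightarrow> 'a \<Rightarrow> bool" and p :: "'a \<Rightarrow> real"
  assumes "mixed_lattice_vector_space le sle"
    and "is_seminorm p"
  shows "mixed_lattice_seminorm le sle p \<longleftrightarrow>
         (mixed_monotone le sle p \<and> (\<forall>x. p (sgen le sle x) = p x))"
  using mixed_lattice_seminorm_imp_mixed_monotone[OF assms(1)]
    mixed_lattice_seminorm_sgen_eq[OF assms(1)]
    mixed_monotone_imp_mixed_lattice_seminorm[OF assms(1)]
  by blast

end
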